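(* Let $g=v+h$ be an s-warped spacetime whose Weyl tensor is $W=\rho(3S+G)$ with $S=U\otimes U-*U\otimes *U$, where $U$ is the time-like unitary 2-form with $U^2=v$, and suppose the Ricci tensor has the form $R=A+\mu h$ with $A$ symmetric and $A\cdot h=0$. Then $$B\equiv R-S[R]-\tfrac12\mathrm r\,g=\beta\,\Pi,\qquad \Pi\equiv v-h,\qquad \beta\equiv\tfrac12\mathrm r-2\mu .$$ Consequently $\mu=\frac14\mathrm r-\frac12\beta$, with $\beta=0$ if $B=0$ and, if $B\neq0$, $\beta=\frac{\epsilon}{2}\sqrt{\operatorname{tr}B^2}$ where $\epsilon=-B(x,x)/|B(x,x)|$ for any unit time-like vector $x$.
   Context: $(M,g)$ is an oriented 4-dimensional spacetime of signature $(-,+,+,+)$, volume element $\eta$, Ricci tensor $R$, scalar curvature $\mathrm r=\operatorname{tr}R$. s-warped: locally $g=v+e^{2\lambda}\hat h$ on a product of a 2-dimensional Lorentzian factor (metric $v$) and a 2-dimensional Riemannian factor (metric $\hat h$), $\lambda$ a function on the Lorentzian factor; $h=e^{2\lambda}\hat h$; $v$ and $h$ are viewed as the orthogonal projectors onto the time-like plane V and space-like plane H. Notation: $(A\cdot B)^\alpha{}_\beta=A^\alpha{}_\mu B^\mu{}_\beta$, $A^2=A\cdot A$, $\operatorname{tr}A=A^\alpha{}_\alpha$, $A(x,x)=A_{\alpha\beta}x^\alpha x^\beta$; $*U=\eta(U)$, $( *U)_{\alpha\beta}=\frac12\eta_{\alpha\beta}{}^{\mu\nu}U_{\mu\nu}$;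 $(U\otimes U)_{\alpha\beta\mu\nu}=U_{\alpha\beta}U_{\mu\nu}$; $(A\wedge B)_{\alpha\beta\mu\nu}=A_{\alpha\mu}B_{\beta\nu}+A_{\beta\nu}B_{\alpha\mu}-A_{\alpha\nu}B_{\beta\mu}-A_{\beta\mu}B_{\alpha\nu}$, $G=\frac12g\wedge g$; for a double 2-form $P$ and symmetric 2-tensor $B$, $P[B]_{\alpha\beta}=P_\alpha{}^\mu{}_\beta{}^\nu B_{\mu\nu}$; for double 2-forms $\operatorname{tr}$ is not used here, $\operatorname{tr}B^2=B^\alpha{}_\mu B^\mu{}_\alpha$. A unit time-like vector satisfies $x^2=-1$. *)

theory Defs
  imports "HOL-Analysis.Analysis"
begin

text \<open>A point of a coordinate chart is a vector
  p :: real^4 (coordinates x^0..x^3, x^0 time-like side); indices run over the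
  4-element type 4. Tensor fields carry all indices lowered:
  a 2-tensor field is T p a b, a 4-tensor field is P p a b c d.\<close>

type_synonym pt = "real^4"
type_synonym tens2 = "4 \<Rightarrow> 4 \<Rightarrow> real"
type_synonym tens4 = "4 \<Rightarrow> 4 \<Rightarrow> 4 \<Rightarrow> 4 \<Rightarrow> real"

definition pd :: "(pt \<Rightarrow> real) \<Rightarrow> 4 \<Rightarrow> pt \<Rightarrow> real" where
  "pd f k p = deriv (\<lambda>t. f (p + t *\<^sub>R axis k 1)) 0"

primrec pds :: "(pt \<Rightarrow> real) \<Rightarrow> 4 list \<Rightarrow> pt \<Rightarrow> real" where
  "pds f [] = f"
| "pds f (k # ks) = pd (pds f ks) k"

definition smooth_on :: "pt set \<Rightarrow> (pt \<Rightarrow> real) \<Rightarrow> bool" where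
  "smooth_on \<Omega> f \<longleftrightarrow> (\<forall>ks. pds f ks differentiable_on \<Omega>)"

definition gmat :: "(pt \<Rightarrow> tens2) \<Rightarrow> pt \<Rightarrow> real^4^4" where
  "gmat g p = (\<chi> i j. g p i j)"

definition ginv :: "(pt \<Rightarrow> tens2) \<Rightarrow> pt \<Rightarrow> tens2" where
  "ginv g p i j = matrix_inv (gmat g p) $ i $ j"

text \<open>s-warped spacetime in adapted coordinates (x^0,x^1) on the Lorentzian factor
  and (x^2,x^3) on the Riemannian factor: g = v + e^(2 lambda) hhat.\<close>
definition s_warped :: "pt set \<Rightarrow> (pt \<Rightarrow> tens2) \<Rightarrow> bool" where
  "s_warped \<Omega> g \<longleftrightarrow> open \<Omega> \<and> (\<forall>i j. smooth_on \<Omega> (\<lambda>q. g q i j)) \<and>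
    (\<exists>(lam :: real \<Rightarrow> real \<Rightarrow> real) (vv :: real \<Rightarrow> real \<Rightarrow> tens2) (hh :: real \<Rightarrow> real \<Rightarrow> tens2).
      \<forall>p\<in>\<Omega>.
        (\<forall>i j. g p i j =
            (if i \<in> {0,1} \<and> j \<in> {0,1} then vv (p$0) (p$1) i j
             else if i \<in> {2,3} \<and> j \<in> {2,3} then exp (2 * lam (p$0) (p$1)) * hh (p$2) (p$3) i j
             else 0)) \<and>
        vv (p$0) (p$1) 0 1 = vv (p$0) (p$1) 1 0 \<and>
        vv (p$0) (p$1) 0 0 * vv (p$0) (p$1) 1 1 - vv (p$0) (p$1) 0 1 * vv (p$0) (p$1) 1 0 < 0 \<and>
        hh (p$2) (p$3) 2 3 = hh (p$2) (p$3) 3 2 \<and>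
        hh (p$2) (p$3) 2 2 > 0 \<and>
        hh (p$2) (p$3) 2 2 * hh (p$2) (p$3) 3 3 - hh (p$2) (p$3) 2 3 * hh (p$2) (p$3) 3 2 > 0)"

text \<open>v and h (indices lowered): the metric restricted to the time-like plane V
  and the space-like plane H.\<close>
definition vpart :: "(pt \<Rightarrow> tens2) \<Rightarrow> pt \<Rightarrow> tens2" where
  "vpart g p a b = (if a \<in> {0,1} \<and> b \<in> {0,1} then g p a b else 0)"

definition hpart :: "(pt \<Rightarrow> tens2) \<Rightarrow> pt \<Rightarrow> tens2" where
  "hpart g p a b = (if a \<in> {2,3} \<and> b \<in> {2,3} then g p a b else 0)"

section \<open>Curvature (convention: Ricci_bd = R^a_bad, sphere has positive curvature)\<close>

definition christoffel :: "(pt \<Rightarrow> tens2) \<Rightarrow> pt \<Rightarrow> 4 \<Rightarrow> 4 \<Rightarrow> 4 \<Rightarrow> real" where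
  "christoffel g p a b c = 1/2 * (\<Sum>d\<in>UNIV. ginv g p a d *
     (pd (\<lambda>q. g q d c) b p + pd (\<lambda>q. g q d b) c p - pd (\<lambda>q. g q b c) d p))"

definition riemann_up :: "(pt \<Rightarrow> tens2) \<Rightarrow> pt \<Rightarrow> tens4" where
  "riemann_up g p a b c d =
     pd (\<lambda>q. christoffel g q a d b) c p - pd (\<lambda>q. christoffel g q a c b) d p +
     (\<Sum>e\<in>UNIV. christoffel g p a c e * christoffel g p e d b
                - christoffel g p a d e * christoffel g p e c b)"

definition riemann :: "(pt \<Rightarrow> tens2) \<Rightarrow> pt \<Rightarrow> tens4" where
  "riemann g p a b c d = (\<Sum>e\<in>UNIV. g p a e * riemann_up g p e b c d)"

definition ricci :: "(pt \<Rightarrow> tens2) \<Rightarrow> pt \<Rightarrow> tens2" where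
  "ricci g p b d = (\<Sum>a\<in>UNIV. riemann_up g p a b a d)"

definition scal :: "(pt \<Rightarrow> tens2) \<Rightarrow> pt \<Rightarrow> real" where
  "scal g p = (\<Sum>a\<in>UNIV. \<Sum>b\<in>UNIV. ginv g p a b * ricci g p a b)"

definition kn :: "tens2 \<Rightarrow> tens2 \<Rightarrow> tens4" where
  "kn A B a b m n = A a m * B b n + A b n * B a m - A a n * B b m - A b m * B a n"

definition Gt :: "(pt \<Rightarrow> tens2) \<Rightarrow> pt \<Rightarrow> tens4" where
  "Gt g p = (\<lambda>a b c d. 1/2 * kn (g p) (g p) a b c d)"

definition weyl :: "(pt \<Rightarrow> tens2) \<Rightarrow> pt \<Rightarrow> tens4" where
  "weyl g p a b c d = riemann g p a b c d - 1/2 * kn (ricci g p) (g p) a b c d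
     + scal g p / 6 * Gt g p a b c d"

definition idx4 :: "4 \<Rightarrow> 4 \<Rightarrow> 4 \<Rightarrow> 4 \<Rightarrow> 4 \<Rightarrow> 4" where
  "idx4 a b c d r = (if r = 0 then a else if r = 1 then b else if r = 2 then c else d)"

text \<open>Levi-Civita symbol: determinant of the matrix with rows e_a, e_b, e_c, e_d.\<close>
definition levi :: "4 \<Rightarrow> 4 \<Rightarrow> 4 \<Rightarrow> 4 \<Rightarrow> real" where
  "levi a b c d = det (\<chi> r. axis (idx4 a b c d r) (1::real) :: real^4^4)"

text \<open>Volume element; orient = 1 or -1 fixes the orientation.\<close>
definition eta :: "(pt \<Rightarrow> tens2) \<Rightarrow> real \<Rightarrow> pt \<Rightarrow> tens4" where
  "eta g orient p a b c d = orient * sqrt \<bar>det (gmat g p)\<bar> * levi a b c d"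

definition hodge :: "(pt \<Rightarrow> tens2) \<Rightarrow> real \<Rightarrow> pt \<Rightarrow> tens2 \<Rightarrow> tens2" where
  "hodge g orient p U a b = 1/2 * (\<Sum>c\<in>UNIV. \<Sum>d\<in>UNIV. \<Sum>e\<in>UNIV. \<Sum>f\<in>UNIV.
       eta g orient p a b e f * ginv g p e c * ginv g p f d * U c d)"

definition Stens :: "(pt \<Rightarrow> tens2) \<Rightarrow> real \<Rightarrow> pt \<Rightarrow> tens2 \<Rightarrow> tens4" where
  "Stens g orient p U a b c d =
     U a b * U c d - hodge g orient p U a b * hodge g orient p U c d"

definition bracket :: "(pt \<Rightarrow> tens2) \<Rightarrow> pt \<Rightarrow> tens4 \<Rightarrow> tens2 \<Rightarrow> tens2" where
  "bracket g p P B a b = (\<Sum>c\<in>UNIV. \<Sum>d\<in>UNIV. \<Sum>m\<in>UNIV. \<Sum>n\<in>UNIV.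
       P a c b d * ginv g p c m * ginv g p d n * B m n)"

definition dot :: "(pt \<Rightarrow> tens2) \<Rightarrow> pt \<Rightarrow> tens2 \<Rightarrow> tens2 \<Rightarrow> tens2" where
  "dot g p T Q a b = (\<Sum>m\<in>UNIV. \<Sum>n\<in>UNIV. T a m * ginv g p m n * Q n b)"

definition trsq :: "(pt \<Rightarrow> tens2) \<Rightarrow> pt \<Rightarrow> tens2 \<Rightarrow> real" where
  "trsq g p B = (\<Sum>a\<in>UNIV. \<Sum>b\<in>UNIV. \<Sum>c\<in>UNIV. \<Sum>d\<in>UNIV.
       ginv g p a b * B b c * ginv g p c d * B d a)"

definition quad :: "tens2 \<Rightarrow> real^4 \<Rightarrow> real" where
  "quad B x = (\<Sum>a\<in>UNIV. \<Sum>b\<in>UNIV. B a b * x$a * x$b)"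

end

theory Submission
  imports Defs
begin

text \<open>
  The theorem is a pointwise algebraic identity.  At a point of an s-warped chart the metric
  is block diagonal, g = v + h, with v a Lorentzian 2x2 block on the coordinate plane
  (x0, x1) and h a Riemannian 2x2 block on (x2, x3); all computations are done in this
  block form, with the explicit inverse metric of a block metric.
\<close>

section \<open>Index bookkeeping for the index type 4\<close>

lemma UNIV_4: "(UNIV :: 4 set) = {0, 1, 2, 3}"
proof -
  have "x \<in> {0, 1, 2, 3}" for x :: 4
    using exhaust_4[of x] by auto
  thus ?thesis by auto
qed

lemma sum_4: "sum f (UNIV :: 4 set) = f 0 + f 1 + f 2 + f 3"
  unfolding UNIV_4 by (simp add: add.assoc)

lemma all_4: "(\<forall>i :: 4. P i) \<longleftrightarrow> P 0 \<and> P 1 \<and> P 2 \<and> P 3"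
  by (metis UNIV_4 UNIV_I insertE empty_iff)

lemma cases_4: "(a :: 4) = 0 \<or> a = 1 \<or> a = 2 \<or> a = 3"
  using UNIV_4 by auto

text \<open>Leibniz expansion of a 4x4 determinant; it yields the determinant of a
  block-diagonal matrix and the values of the Levi-Civita symbol.\<close>

lemma det_4: "det (A :: real^4^4) =
    A$0$0 * A$1$1 * A$2$2 * A$3$3 - A$0$0 * A$1$1 * A$2$3 * A$3$2 - A$0$0 * A$1$2 * A$2$1 * A$3$3
  + A$0$0 * A$1$2 * A$2$3 * A$3$1 + A$0$0 * A$1$3 * A$2$1 * A$3$2 - A$0$0 * A$1$3 * A$2$2 * A$3$1
  - A$0$1 * A$1$0 * A$2$2 * A$3$3 + A$0$1 * A$1$0 * A$2$3 * A$3$2 + A$0$1 * A$1$2 * A$2$0 * A$3$3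
  - A$0$1 * A$1$2 * A$2$3 * A$3$0 - A$0$1 * A$1$3 * A$2$0 * A$3$2 + A$0$1 * A$1$3 * A$2$2 * A$3$0
  + A$0$2 * A$1$0 * A$2$1 * A$3$3 - A$0$2 * A$1$0 * A$2$3 * A$3$1 - A$0$2 * A$1$1 * A$2$0 * A$3$3
  + A$0$2 * A$1$1 * A$2$3 * A$3$0 + A$0$2 * A$1$3 * A$2$0 * A$3$1 - A$0$2 * A$1$3 * A$2$1 * A$3$0
  - A$0$3 * A$1$0 * A$2$1 * A$3$2 + A$0$3 * A$1$0 * A$2$2 * A$3$1 + A$0$3 * A$1$1 * A$2$0 * A$3$2
  - A$0$3 * A$1$1 * A$2$2 * A$3$0 - A$0$3 * A$1$2 * A$2$0 * A$3$1 + A$0$3 * A$1$2 * A$2$1 * A$3$0"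
proof -
  have f1: "finite {1::4, 2, 3}" "0 \<notin> {1::4, 2, 3}" by auto
  have f2: "finite {2::4, 3}" "1 \<notin> {2::4, 3}" by auto
  have f3: "finite {3::4}" "2 \<notin> {3::4}" by auto
  show ?thesis
    unfolding det_def UNIV_4
    unfolding sum_over_permutations_insert[OF f1] sum_over_permutations_insert[OF f2]
      sum_over_permutations_insert[OF f3] permutes_sing
    by (simp add: sign_swap_id permutation_swap_id permutation_compose sign_compose sign_id
        swap_id_eq algebra_simps)
qed

lemma det_block:
  fixes A :: "real^4^4"
  assumes "A$0$2 = 0" "A$0$3 = 0" "A$1$2 = 0" "A$1$3 = 0"
    "A$2$0 = 0" "A$2$1 = 0" "A$3$0 = 0" "A$3$1 = 0"
  shows "det A = (A$0$0 * A$1$1 - A$0$1 * A$1$0) * (A$2$2 * A$3$3 - A$2$3 * A$3$2)"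
  using assms by (simp add: det_4 algebra_simps)

text \<open>The components of the Levi-Civita symbol needed to dualise a 2-form on V.\<close>

lemma levi_01: "levi a b 0 1 = (if a = 2 \<and> b = 3 then 1 else if a = 3 \<and> b = 2 then -1 else 0)"
  and levi_10: "levi a b 1 0 = (if a = 2 \<and> b = 3 then -1 else if a = 3 \<and> b = 2 then 1 else 0)"
  and levi_00: "levi a b 0 0 = 0"
  and levi_11: "levi a b 1 1 = 0"
  using cases_4[of a] cases_4[of b] unfolding levi_def det_4 by (auto simp: axis_def idx4_def)

section \<open>Block metrics\<close>

definition detV :: "tens2 \<Rightarrow> real" where
  "detV G = G 0 0 * G 1 1 - G 0 1 * G 1 0"

definition detH :: "tens2 \<Rightarrow> real" where
  "detH G = G 2 2 * G 3 3 - G 2 3 * G 3 2"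

definition block_sym :: "tens2 \<Rightarrow> bool" where
  "block_sym G \<longleftrightarrow> G 0 2 = 0 \<and> G 0 3 = 0 \<and> G 1 2 = 0 \<and> G 1 3 = 0 \<and>
     G 2 0 = 0 \<and> G 2 1 = 0 \<and> G 3 0 = 0 \<and> G 3 1 = 0 \<and> G 1 0 = G 0 1 \<and> G 3 2 = G 2 3"

definition split_metric :: "tens2 \<Rightarrow> bool" where
  "split_metric G \<longleftrightarrow> block_sym G \<and> detV G < 0 \<and> detH G > 0 \<and> G 2 2 > 0"

definition block_inv :: "tens2 \<Rightarrow> tens2" where
  "block_inv G a b =
     (if a = 0 \<and> b = 0 then G 1 1 / detV G
      else if a = 0 \<and> b = 1 \<or> a = 1 \<and> b = 0 then - G 0 1 / detV G
      else if a = 1 \<and> b = 1 then G 0 0 / detV G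
      else if a = 2 \<and> b = 2 then G 3 3 / detH G
      else if a = 2 \<and> b = 3 \<or> a = 3 \<and> b = 2 then - G 2 3 / detH G
      else if a = 3 \<and> b = 3 then G 2 2 / detH G else 0)"

lemma matrix_inv_unique:
  fixes A M :: "real^'n^'n"
  assumes "A ** M = mat 1" "M ** A = mat 1"
  shows "matrix_inv A = M"
proof -
  let ?P = "\<lambda>A'. A ** A' = mat 1 \<and> A' ** A = mat 1"
  have inv: "?P (matrix_inv A)"
    unfolding matrix_inv_def by (rule someI[of ?P M]) (use assms in auto)
  then have "matrix_inv A = (matrix_inv A ** A) ** M"
    by (metis assms(1) matrix_mul_assoc matrix_mul_rid)
  also have "\<dots> = M" using inv by (simp add: matrix_mul_lid)
  finally show ?thesis .
qed

lemma ginv_block: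
  assumes "block_sym (g p)" "detV (g p) \<noteq> 0" "detH (g p) \<noteq> 0"
  shows "ginv g p = block_inv (g p)"
proof -
  let ?M = "(\<chi> i j. block_inv (g p) i j) :: real^4^4"
  have sq: "detV (g p) * detV (g p) \<noteq> 0" "detH (g p) * detH (g p) \<noteq> 0"
    using assms by auto
  have right: "gmat g p ** ?M = mat 1" and left: "?M ** gmat g p = mat 1"
    using assms sq unfolding vec_eq_iff matrix_matrix_mult_def mat_def gmat_def
    by (simp_all add: all_4 sum_4 block_inv_def block_sym_def detV_def detH_def field_simps)
  show ?thesis
    using matrix_inv_unique[OF right left] unfolding ginv_def[abs_def] by (simp add: fun_eq_iff)
qed

lemma ginv_split:
  assumes "split_metric (g p)"
  shows "ginv g p = block_inv (g p)"
  using assms ginv_block unfolding split_metric_def by force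

lemma block_inv_zero:
  "block_inv G 0 2 = 0" "block_inv G 0 3 = 0" "block_inv G 1 2 = 0" "block_inv G 1 3 = 0"
  "block_inv G 2 0 = 0" "block_inv G 2 1 = 0" "block_inv G 3 0 = 0" "block_inv G 3 1 = 0"
  "block_inv G 1 0 = block_inv G 0 1" "block_inv G 3 2 = block_inv G 2 3"
  by (simp_all add: block_inv_def)

lemma block_inv_det_V:
  assumes "block_sym G" "detV G \<noteq> 0"
  shows "block_inv G 0 0 * block_inv G 1 1 - block_inv G 0 1 * block_inv G 0 1 = 1 / detV G"
  using assms by (simp add: block_inv_def field_simps)
    (simp add: detV_def block_sym_def power2_eq_square algebra_simps)

lemma s_warped_split:
  assumes "s_warped \<Omega> g" and "p \<in> \<Omega>"
  shows "split_metric (g p)"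
proof -
  obtain lam vv hh where W: "\<forall>p\<in>\<Omega>.
        (\<forall>i j. g p i j =
            (if i \<in> {0,1} \<and> j \<in> {0,1} then vv (p$0) (p$1) i j
             else if i \<in> {2,3} \<and> j \<in> {2,3} then exp (2 * lam (p$0) (p$1)) * hh (p$2) (p$3) i j
             else 0)) \<and>
        vv (p$0) (p$1) 0 1 = vv (p$0) (p$1) 1 0 \<and>
        vv (p$0) (p$1) 0 0 * vv (p$0) (p$1) 1 1 - vv (p$0) (p$1) 0 1 * vv (p$0) (p$1) 1 0 < 0 \<and>
        hh (p$2) (p$3) 2 3 = hh (p$2) (p$3) 3 2 \<and>
        hh (p$2) (p$3) 2 2 > 0 \<and>
        hh (p$2) (p$3) 2 2 * hh (p$2) (p$3) 3 3 - hh (p$2) (p$3) 2 3 * hh (p$2) (p$3) 3 2 > 0"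
    using assms(1) unfolding s_warped_def by blast
  define V where "V = vv (p$0) (p$1)"
  define H where "H = hh (p$2) (p$3)"
  define e where "e = exp (2 * lam (p$0) (p$1))"
  have gp: "g p i j = (if i \<in> {0,1} \<and> j \<in> {0,1} then V i j
             else if i \<in> {2,3} \<and> j \<in> {2,3} then e * H i j else 0)" for i j
    using W assms(2) unfolding V_def H_def e_def by auto
  have V: "V 0 1 = V 1 0" "V 0 0 * V 1 1 - V 0 1 * V 1 0 < 0"
    and H: "H 2 3 = H 3 2" "H 2 2 > 0" "H 2 2 * H 3 3 - H 2 3 * H 3 2 > 0"
    using W assms(2) unfolding V_def H_def e_def by auto
  have "e > 0" unfolding e_def by simp
  moreover have "detH (g p) = e * e * (H 2 2 * H 3 3 - H 2 3 * H 3 2)"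
    unfolding detH_def gp by (simp add: algebra_simps)
  ultimately show ?thesis
    unfolding split_metric_def block_sym_def detV_def using V H by (simp add: gp)
qed

lemma dot_assoc: "dot g p (dot g p T Q) R = dot g p T (dot g p Q R)"
  unfolding dot_def[abs_def]
  by (simp add: fun_eq_iff sum_distrib_left sum_distrib_right sum_4 algebra_simps)

section \<open>The projectors v and h and the 2-form U\<close>

text \<open>The area forms of the planes V and H (up to normalisation).\<close>

definition area_V :: "real \<Rightarrow> tens2" where
  "area_V u a b = (if a = 0 \<and> b = 1 then u else if a = 1 \<and> b = 0 then - u else 0)"

definition area_H :: "real \<Rightarrow> tens2" where
  "area_H w a b = (if a = 2 \<and> b = 3 then w else if a = 3 \<and> b = 2 then - w else 0)"

lemma dot_vpart_right:
  assumes "split_metric (g p)"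
  shows "dot g p T (vpart g p) a b = (if b \<in> {0, 1} then T a b else 0)"
  using assms cases_4[of b]
  by (auto simp: split_metric_def dot_def vpart_def sum_4 ginv_split[of g p] block_inv_def
      block_sym_def field_simps) (auto simp: detV_def algebra_simps)

lemma dot_vpart_left:
  assumes "split_metric (g p)"
  shows "dot g p (vpart g p) T a b = (if a \<in> {0, 1} then T a b else 0)"
  using assms cases_4[of a]
  by (auto simp: split_metric_def dot_def vpart_def sum_4 ginv_split[of g p] block_inv_def
      block_sym_def field_simps) (auto simp: detV_def algebra_simps)

lemma dot_hpart_right:
  assumes "split_metric (g p)"
  shows "dot g p T (hpart g p) a b = (if b \<in> {2, 3} then T a b else 0)"
  using assms cases_4[of b]
  by (auto simp: split_metric_def dot_def hpart_def sum_4 ginv_split[of g p] block_inv_def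
      block_sym_def field_simps) (auto simp: detH_def algebra_simps)

text \<open>A 2-form with U.U = v commutes with v = U.U, so it has no mixed H-V components.\<close>

lemma form_commutes_with_vpart:
  assumes split: "split_metric (g p)"
    and sq: "\<forall>a b. dot g p U U a b = vpart g p a b"
    and a: "a \<in> {2, 3}" and b: "b \<in> {0, 1}"
  shows "U a b = 0"
proof -
  have sqf: "dot g p U U = vpart g p" using sq by (simp add: fun_eq_iff)
  have "dot g p (dot g p U U) U = dot g p U (dot g p U U)" by (rule dot_assoc)
  then have "dot g p (vpart g p) U a b = dot g p U (vpart g p) a b" by (simp add: sqf)
  then show ?thesis
    using a b by (auto simp: dot_vpart_left[of g p, OF split] dot_vpart_right[of g p, OF split])
qed

lemma timelike_unit_form:
  assumes split: "split_metric (g p)"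
    and anti: "\<forall>a b. U a b = - U b a"
    and sq: "\<forall>a b. dot g p U U a b = vpart g p a b"
    and unit: "(\<Sum>a\<in>UNIV. \<Sum>b\<in>UNIV. \<Sum>c\<in>UNIV. \<Sum>d\<in>UNIV.
                  U a b * ginv g p a c * ginv g p b d * U c d) = -2"
  shows "\<exists>u. U = area_V u \<and> u * u = - detV (g p)"
proof -
  note N = ginv_split[of g p, OF split]
  have G: "block_sym (g p)" "detV (g p) < 0" "detH (g p) > 0" "g p 2 2 > 0"
    using split unfolding split_metric_def by auto
  have diag: "U a a = 0" for a using anti[rule_format, of a a] by simp
  have cross: "U 2 0 = 0" "U 2 1 = 0" "U 3 0 = 0" "U 3 1 = 0"
    using form_commutes_with_vpart[OF split sq] by auto
  then have cross': "U 0 2 = 0" "U 1 2 = 0" "U 0 3 = 0" "U 1 3 = 0"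
    using anti by (metis neg_equal_0_iff_equal)+
  have "dot g p U U 2 2 = 0" using sq by (simp add: vpart_def)
  then have "U 2 3 * U 3 2 * (g p 2 2 / detH (g p)) = 0"
    using G(1) cross cross' diag by (simp add: dot_def sum_4 N block_inv_def block_sym_def) blast
  then have "U 2 3 = 0"
    using G(3,4) anti[rule_format, of 3 2] by simp
  define u where "u = U 0 1"
  have Uu: "U = area_V u"
    using \<open>U 2 3 = 0\<close> cross cross' diag anti[rule_format, of 1 0]
      anti[rule_format, of 3 2]
    unfolding fun_eq_iff all_4 area_V_def u_def by auto
  have "(\<Sum>a\<in>UNIV. \<Sum>b\<in>UNIV. \<Sum>c\<in>UNIV. \<Sum>d\<in>UNIV.
               U a b * ginv g p a c * ginv g p b d * U c d) = 2 * (u * u) *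
        (block_inv (g p) 0 0 * block_inv (g p) 1 1 - block_inv (g p) 0 1 * block_inv (g p) 0 1)"
    unfolding Uu by (simp add: sum_4 N area_V_def block_inv_zero algebra_simps)
  then have "(\<Sum>a\<in>UNIV. \<Sum>b\<in>UNIV. \<Sum>c\<in>UNIV. \<Sum>d\<in>UNIV.
               U a b * ginv g p a c * ginv g p b d * U c d) = 2 * (u * u) / detV (g p)"
    using block_inv_det_V[of "g p"] G(1,2) by simp
  then have "2 * (u * u) / detV (g p) = -2" using unit by simp
  then have "u * u = - detV (g p)" using G(2) by (simp add: field_simps)
  with Uu show ?thesis by blast
qed

lemma hodge_area_V:
  assumes "block_sym (g p)" "detV (g p) \<noteq> 0" "detH (g p) \<noteq> 0"
  shows "hodge g orient p (area_V u) =
           area_H (orient * sqrt \<bar>det (gmat g p)\<bar> * u / detV (g p))"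
proof -
  have N: "ginv g p = block_inv (g p)" using ginv_block assms by blast
  note k = block_inv_det_V[OF assms(1,2)]
  have "hodge g orient p (area_V u) a b = orient * sqrt \<bar>det (gmat g p)\<bar> * u
        * (block_inv (g p) 0 0 * block_inv (g p) 1 1 - block_inv (g p) 0 1 * block_inv (g p) 0 1)
        * (levi a b 0 1 - levi a b 1 0) / 2" for a b
    unfolding hodge_def eta_def sum_4 N area_V_def
    by (simp add: levi_00 levi_11 block_inv_zero algebra_simps)
  then show ?thesis
    unfolding k fun_eq_iff area_H_def levi_01 levi_10 by auto
qed

lemma hodge_area_V_sq:
  assumes split: "split_metric (g p)" and orient: "orient = 1 \<or> orient = -1"
    and u: "u * u = - detV (g p)"
  defines "w \<equiv> orient * sqrt \<bar>det (gmat g p)\<bar> * u / detV (g p)"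
  shows "w * w = detH (g p)"
proof -
  have G: "block_sym (g p)" "detV (g p) < 0" "detH (g p) > 0"
    using split unfolding split_metric_def by auto
  have "det (gmat g p) = detV (g p) * detH (g p)"
    using G(1) by (subst det_block) (simp_all add: gmat_def block_sym_def detV_def detH_def)
  then have sq: "(sqrt \<bar>det (gmat g p)\<bar>)^2 = - detV (g p) * detH (g p)"
    using mult_neg_pos[OF G(2,3)] by simp
  have "w * w = (orient * orient) * (sqrt \<bar>det (gmat g p)\<bar>)^2 * (u * u) / (detV (g p))^2"
    unfolding w_def by (simp add: power2_eq_square algebra_simps)
  also have "\<dots> = detH (g p)"
    using orient G unfolding sq u by (auto simp: power2_eq_square field_simps)
  finally show ?thesis .
qed

section \<open>The Ricci tensor and S[Ric]\<close>

text \<open>The trace g^ab A_ab of a symmetric tensor A supported on V.\<close>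

definition trace_V :: "tens2 \<Rightarrow> tens2 \<Rightarrow> real" where
  "trace_V G A = block_inv G 0 0 * A 0 0 + 2 * block_inv G 0 1 * A 0 1 + block_inv G 1 1 * A 1 1"

lemma metric_eq_vpart_plus_hpart:
  assumes "block_sym (g p)"
  shows "g p a b = vpart g p a b + hpart g p a b"
  using cases_4[of a] cases_4[of b] assms
  by (elim disjE) (simp_all add: vpart_def hpart_def block_sym_def)

lemma tensor_orthogonal_to_H:
  assumes split: "split_metric (g p)"
    and Ah: "\<forall>a b. dot g p A (hpart g p) a b = 0"
    and As: "\<forall>a b. A a b = A b a"
    and ab: "\<not> (a \<in> {0, 1} \<and> b \<in> {0, 1})"
  shows "A a b = 0"
proof -
  have zero: "A c d = 0" if "d \<in> {2, 3}" for c d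
    using Ah[rule_format, of c d] that by (auto simp: dot_hpart_right[of g p, OF split])
  have "b \<in> {2, 3} \<or> a \<in> {2, 3}" using ab cases_4[of a] cases_4[of b] by auto
  then show ?thesis using zero[of b a] zero[of a b] As by auto
qed

lemma trace_block:
  assumes split: "split_metric (g p)"
    and R: "\<And>a b. R a b = (if a \<in> {0, 1} \<and> b \<in> {0, 1} then A a b else 0) + mu * hpart g p a b"
    and As: "A 1 0 = A 0 1"
  shows "(\<Sum>a\<in>UNIV. \<Sum>b\<in>UNIV. ginv g p a b * R a b) = trace_V (g p) A + 2 * mu"
proof -
  have G: "block_sym (g p)" "detH (g p) \<noteq> 0"
    using split unfolding split_metric_def by auto
  have dH: "detH (g p) = g p 2 2 * g p 3 3 - g p 2 3 * g p 2 3"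
    using G(1) by (simp add: detH_def block_sym_def)
  show ?thesis
    unfolding sum_4 ginv_split[of g p, OF split] R trace_V_def hpart_def
    using G As dH[symmetric] by (simp add: block_inv_def block_sym_def) (simp add: field_simps)
qed

lemma bracket_S_block:
  assumes split: "split_metric (g p)"
    and u: "u * u = - detV (g p)" and w: "w * w = detH (g p)"
    and R: "\<And>a b. R a b = (if a \<in> {0, 1} \<and> b \<in> {0, 1} then A a b else 0) + mu * hpart g p a b"
    and As: "A 1 0 = A 0 1"
  shows "bracket g p (\<lambda>a b c d. area_V u a b * area_V u c d - area_H w a b * area_H w c d) R a b
    = (if a \<in> {0, 1} \<and> b \<in> {0, 1} then A a b - trace_V (g p) A * g p a b else 0)
      - mu * hpart g p a b"
proof -
  have G: "block_sym (g p)" "detV (g p) \<noteq> 0" "detH (g p) \<noteq> 0"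
    using split unfolding split_metric_def by auto
  have dV: "detV (g p) = g p 0 0 * g p 1 1 - g p 0 1 * g p 0 1"
    and dH: "detH (g p) = g p 2 2 * g p 3 3 - g p 2 3 * g p 2 3"
    using G(1) by (simp_all add: detV_def detH_def block_sym_def)
  have "\<forall>a b. bracket g p (\<lambda>a b c d. area_V u a b * area_V u c d - area_H w a b * area_H w c d) R a b
    = (if a \<in> {0, 1} \<and> b \<in> {0, 1} then A a b - trace_V (g p) A * g p a b else 0)
      - mu * hpart g p a b"
    unfolding all_4 bracket_def sum_4 ginv_split[of g p, OF split] R area_V_def area_H_def
      trace_V_def hpart_def
    using G As u w dV[symmetric] dH[symmetric]
    apply (intro conjI)
    apply (simp_all add: block_inv_def block_sym_def)
    apply (simp_all add: field_simps)
    apply algebra+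
    done
  then show ?thesis by blast
qed

section \<open>Consequences of B = \<beta> \<Pi>\<close>

lemma quad_diff: "quad (\<lambda>a b. A a b - B a b) x = quad A x - quad B x"
  and quad_add: "quad (\<lambda>a b. A a b + B a b) x = quad A x + quad B x"
  and quad_scale: "quad (\<lambda>a b. c * A a b) x = c * quad A x"
  unfolding quad_def by (simp_all add: sum_subtractf sum.distrib sum_distrib_left algebra_simps)

lemma quad_hpart_nonneg:
  assumes split: "split_metric (g p)"
  shows "quad (hpart g p) x \<ge> 0"
proof -
  let ?G = "g p"
  have G: "block_sym ?G" "detH ?G > 0" "?G 2 2 > 0"
    using split unfolding split_metric_def by auto
  have q: "quad (hpart g p) x = ?G 2 2 * x$2 * x$2 + 2 * ?G 2 3 * x$2 * x$3 + ?G 3 3 * x$3 * x$3"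
    using G(1) unfolding quad_def sum_4 hpart_def block_sym_def by (simp add: algebra_simps)
  have "?G 2 2 * quad (hpart g p) x = (?G 2 2 * x$2 + ?G 2 3 * x$3)^2 + detH ?G * (x$3)^2"
    using G(1) unfolding q detH_def block_sym_def by (simp add: power2_eq_square algebra_simps)
  also have "\<dots> \<ge> 0" using G(2) by simp
  finally show ?thesis using G(3) by (simp add: zero_le_mult_iff)
qed

text \<open>\<Pi> = v - h is negative on unit time-like vectors: \<Pi>(x,x) = -1 - 2 h(x,x).\<close>

lemma quad_Pi_negative:
  assumes split: "split_metric (g p)" and x: "quad (g p) x = -1"
  shows "quad (\<lambda>a b. vpart g p a b - hpart g p a b) x < 0"
proof -
  have "block_sym (g p)" using split unfolding split_metric_def by simp
  then have "quad (g p) x = quad (vpart g p) x + quad (hpart g p) x"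
    using metric_eq_vpart_plus_hpart[of g p] quad_add[of "vpart g p" "hpart g p"] by presburger
  then show ?thesis
    using x quad_hpart_nonneg[of g p x, OF split] unfolding quad_diff by linarith
qed

text \<open>tr (\<beta> \<Pi>)^2 = 4 \<beta>^2, since \<Pi>^a_b is a reflection of the 4-dimensional tangent space.\<close>

lemma trsq_Pi:
  assumes split: "split_metric (g p)"
  shows "trsq g p (\<lambda>a b. \<beta> * (vpart g p a b - hpart g p a b)) = 4 * \<beta>^2"
proof -
  have G: "block_sym (g p)" "detV (g p) \<noteq> 0" "detH (g p) \<noteq> 0"
    using split unfolding split_metric_def by auto
  have dV: "detV (g p) = g p 0 0 * g p 1 1 - g p 0 1 * g p 0 1"
    and dH: "detH (g p) = g p 2 2 * g p 3 3 - g p 2 3 * g p 2 3"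
    using G(1) by (simp_all add: detV_def detH_def block_sym_def)
  show ?thesis
    unfolding trsq_def sum_4 ginv_split[of g p, OF split] vpart_def hpart_def
    using G dV[symmetric] dH[symmetric]
    apply (simp add: block_inv_def block_sym_def)
    apply (simp add: field_simps power2_eq_square)
    apply algebra
    done
qed

lemma beta_consequences:
  fixes B :: tens2
  assumes split: "split_metric (g p)"
    and B: "\<forall>a b. B a b = \<beta> * (vpart g p a b - hpart g p a b)"
    and \<beta>: "\<beta> = r / 2 - 2 * mu"
  shows "mu = r / 4 - \<beta> / 2"
    and "(\<forall>a b. B a b = 0) \<longrightarrow> \<beta> = 0"
    and "(\<exists>a b. B a b \<noteq> 0) \<longrightarrow> (\<forall>x. quad (g p) x = -1 \<longrightarrow>
           (let \<epsilon> = - quad B x / \<bar>quad B x\<bar> in \<beta> = \<epsilon> / 2 * sqrt (trsq g p B)))"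
proof -
  show "mu = r / 4 - \<beta> / 2" using \<beta> by linarith
  have Bf: "B = (\<lambda>a b. \<beta> * (vpart g p a b - hpart g p a b))" using B by (simp add: fun_eq_iff)
  have "hpart g p 2 2 > 0" "vpart g p 2 2 = 0"
    using split unfolding split_metric_def hpart_def vpart_def by auto
  then show "(\<forall>a b. B a b = 0) \<longrightarrow> \<beta> = 0" using B[rule_format, of 2 2] by auto
  show "(\<exists>a b. B a b \<noteq> 0) \<longrightarrow> (\<forall>x. quad (g p) x = -1 \<longrightarrow>
           (let \<epsilon> = - quad B x / \<bar>quad B x\<bar> in \<beta> = \<epsilon> / 2 * sqrt (trsq g p B)))"
  proof (intro impI allI)
    fix x assume "\<exists>a b. B a b \<noteq> 0" and x: "quad (g p) x = -1"
    define q where "q = quad (\<lambda>a b. vpart g p a b - hpart g p a b) x"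
    have "\<beta> \<noteq> 0" using B \<open>\<exists>a b. B a b \<noteq> 0\<close> by auto
    moreover have "q < 0" unfolding q_def using quad_Pi_negative[of g p, OF split x] .
    moreover have "sqrt (trsq g p B) = 2 * \<bar>\<beta>\<bar>"
      unfolding Bf trsq_Pi[of g p, OF split] by (simp add: real_sqrt_mult)
    ultimately show "let \<epsilon> = - quad B x / \<bar>quad B x\<bar> in \<beta> = \<epsilon> / 2 * sqrt (trsq g p B)"
      unfolding Let_def by (subst (1 2) Bf) (auto simp: quad_scale q_def[symmetric] abs_mult)
  qed
qed

lemma B_eq_beta_Pi_at_point:
  assumes split: "split_metric (g p)" and orient: "orient = 1 \<or> orient = -1"
    and anti: "\<forall>a b. U a b = - U b a"
    and sq: "\<forall>a b. dot g p U U a b = vpart g p a b"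
    and unit: "(\<Sum>a\<in>UNIV. \<Sum>b\<in>UNIV. \<Sum>c\<in>UNIV. \<Sum>d\<in>UNIV.
                  U a b * ginv g p a c * ginv g p b d * U c d) = -2"
    and As: "\<forall>a b. A a b = A b a"
    and Ah: "\<forall>a b. dot g p A (hpart g p) a b = 0"
    and Ric: "\<forall>a b. ricci g p a b = A a b + mu * hpart g p a b"
  shows "ricci g p a b - bracket g p (Stens g orient p U) (ricci g p) a b - scal g p / 2 * g p a b
           = (scal g p / 2 - 2 * mu) * (vpart g p a b - hpart g p a b)"
proof -
  have G: "block_sym (g p)" "detV (g p) \<noteq> 0" "detH (g p) \<noteq> 0"
    using split unfolding split_metric_def by auto
  obtain u where U: "U = area_V u" and u: "u * u = - detV (g p)"
    using timelike_unit_form[of g p, OF split anti sq unit] by blast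
  define w where "w = orient * sqrt \<bar>det (gmat g p)\<bar> * u / detV (g p)"
  have S: "Stens g orient p U = (\<lambda>a b c d. area_V u a b * area_V u c d - area_H w a b * area_H w c d)"
    unfolding Stens_def U hodge_area_V[of g p, OF G] w_def ..
  have w: "w * w = detH (g p)"
    unfolding w_def using hodge_area_V_sq[of g p, OF split orient u] .
  have R: "ricci g p a b = (if a \<in> {0, 1} \<and> b \<in> {0, 1} then A a b else 0) + mu * hpart g p a b"
    for a b using Ric tensor_orthogonal_to_H[of g p, OF split Ah As, of a b] by auto
  have A10: "A 1 0 = A 0 1" using As by simp
  have r: "scal g p = trace_V (g p) A + 2 * mu"
    unfolding scal_def using trace_block[of g p, OF split R A10] .
  have Sric: "bracket g p (Stens g orient p U) (ricci g p) a b
      = (if a \<in> {0, 1} \<and> b \<in> {0, 1} then A a b - trace_V (g p) A * g p a b else 0)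
        - mu * hpart g p a b"
    unfolding S using bracket_S_block[of g p, OF split u w R A10] .
  have g: "g p a b = vpart g p a b + hpart g p a b"
    using metric_eq_vpart_plus_hpart[of g p, OF G(1)] .
  show ?thesis
  proof (cases "a \<in> {0, 1} \<and> b \<in> {0, 1}")
    case True
    then have "vpart g p a b = g p a b" "hpart g p a b = 0" by (auto simp: vpart_def hpart_def)
    then show ?thesis using True unfolding Sric R r by (simp add: algebra_simps)
  next
    case False
    then have "vpart g p a b = 0" by (auto simp: vpart_def)
    then show ?thesis
      using g unfolding Sric R r if_not_P[OF False] by (simp add: algebra_simps)
  qed
qed

lemma mainTheorem10_at_point:
  assumes split: "split_metric (g p)" and orient: "orient = 1 \<or> orient = -1"
    and anti: "\<forall>a b. U a b = - U b a"
    and sq: "\<forall>a b. dot g p U U a b = vpart g p a b"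
    and unit: "(\<Sum>a\<in>UNIV. \<Sum>b\<in>UNIV. \<Sum>c\<in>UNIV. \<Sum>d\<in>UNIV.
                  U a b * ginv g p a c * ginv g p b d * U c d) = -2"
    and As: "\<forall>a b. A a b = A b a"
    and Ah: "\<forall>a b. dot g p A (hpart g p) a b = 0"
    and Ric: "\<forall>a b. ricci g p a b = A a b + mu * hpart g p a b"
  shows "let B = (\<lambda>a b. ricci g p a b - bracket g p (Stens g orient p U) (ricci g p) a b
                     - scal g p / 2 * g p a b);
         \<beta> = scal g p / 2 - 2 * mu
     in (\<forall>a b. B a b = \<beta> * (vpart g p a b - hpart g p a b))
        \<and> mu = scal g p / 4 - \<beta> / 2
        \<and> ((\<forall>a b. B a b = 0) \<longrightarrow> \<beta> = 0)
        \<and> ((\<exists>a b. B a b \<noteq> 0) \<longrightarrow>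
             (\<forall>x :: real^4. quad (g p) x = -1 \<longrightarrow>
                (let \<epsilon> = - quad B x / \<bar>quad B x\<bar> in \<beta> = \<epsilon> / 2 * sqrt (trsq g p B))))"
proof -
  have B: "\<forall>a b. ricci g p a b - bracket g p (Stens g orient p U) (ricci g p) a b
              - scal g p / 2 * g p a b = (scal g p / 2 - 2 * mu) * (vpart g p a b - hpart g p a b)"
    using B_eq_beta_Pi_at_point[of g p, OF split orient anti sq unit As Ah Ric] by blast
  show ?thesis
    unfolding Let_def[of "\<lambda>a b. ricci g p a b - _ a b - _ * g p a b"] Let_def[of "_ - 2 * mu"]
    using B beta_consequences[of g p, OF split B refl] by blast
qed

theorem mainTheorem10:
  fixes \<Omega> :: "(real^4) set" and g :: "real^4 \<Rightarrow> 4 \<Rightarrow> 4 \<Rightarrow> real"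
    and orient :: real and U A :: "real^4 \<Rightarrow> 4 \<Rightarrow> 4 \<Rightarrow> real"
    and \<rho> \<mu> :: "real^4 \<Rightarrow> real"
  assumes warped: "s_warped \<Omega> g"
    and orient: "orient = 1 \<or> orient = -1"
    and U_form: "\<forall>p\<in>\<Omega>. \<forall>a b. U p a b = - U p b a"
    and U_sq: "\<forall>p\<in>\<Omega>. \<forall>a b. dot g p (U p) (U p) a b = vpart g p a b"
    and U_unit: "\<forall>p\<in>\<Omega>. (\<Sum>a\<in>UNIV. \<Sum>b\<in>UNIV. \<Sum>c\<in>UNIV. \<Sum>d\<in>UNIV.
                     U p a b * ginv g p a c * ginv g p b d * U p c d) = -2"
    and Weyl: "\<forall>p\<in>\<Omega>. \<forall>a b c d. weyl g p a b c d
                  = \<rho> p * (3 * Stens g orient p (U p) a b c d + Gt g p a b c d)"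
    and A_sym: "\<forall>p\<in>\<Omega>. \<forall>a b. A p a b = A p b a"
    and A_h: "\<forall>p\<in>\<Omega>. \<forall>a b. dot g p (A p) (hpart g p) a b = 0"
    and Ric: "\<forall>p\<in>\<Omega>. \<forall>a b. ricci g p a b = A p a b + \<mu> p * hpart g p a b"
  shows "\<forall>p\<in>\<Omega>.
    (let B = (\<lambda>a b. ricci g p a b - bracket g p (Stens g orient p (U p)) (ricci g p) a b
                     - scal g p / 2 * g p a b);
         \<beta> = scal g p / 2 - 2 * \<mu> p
     in (\<forall>a b. B a b = \<beta> * (vpart g p a b - hpart g p a b))
        \<and> \<mu> p = scal g p / 4 - \<beta> / 2
        \<and> ((\<forall>a b. B a b = 0) \<longrightarrow> \<beta> = 0)
        \<and> ((\<exists>a b. B a b \<noteq> 0) \<longrightarrow>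
             (\<forall>x :: real^4. quad (g p) x = -1 \<longrightarrow>
                (let \<epsilon> = - quad B x / \<bar>quad B x\<bar> in \<beta> = \<epsilon> / 2 * sqrt (trsq g p B)))))"
proof
  fix p assume p: "p \<in> \<Omega>"
  show "let B = (\<lambda>a b. ricci g p a b - bracket g p (Stens g orient p (U p)) (ricci g p) a b
                     - scal g p / 2 * g p a b);
         \<beta> = scal g p / 2 - 2 * \<mu> p
     in (\<forall>a b. B a b = \<beta> * (vpart g p a b - hpart g p a b))
        \<and> \<mu> p = scal g p / 4 - \<beta> / 2
        \<and> ((\<forall>a b. B a b = 0) \<longrightarrow> \<beta> = 0)
        \<and> ((\<exists>a b. B a b \<noteq> 0) \<longrightarrow>
             (\<forall>x :: real^4. quad (g p) x = -1 \<longrightarrow>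
                (let \<epsilon> = - quad B x / \<bar>quad B x\<bar> in \<beta> = \<epsilon> / 2 * sqrt (trsq g p B))))"
    using mainTheorem10_at_point[of g p orient "U p" "A p" "\<mu> p",
        OF s_warped_split[OF warped p]] orient p U_form U_sq U_unit A_sym A_h Ric by blast
qed

end
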